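(* Let $R$ be a commutative ring with identity, $I$ an ideal of $R$, and $M$ an $R$-module. The following are equivalent: (1) $M$ is $I$-prime and $I$-torsion; (2) $M$ is $I$-coprime and $I$-adically complete; (3) $M$ is $I$-reduced and $I$-torsion; (4) $M$ is $I$-coreduced and $I$-adically complete; (5) $IM=0$.
   Context: All rings are commutative with identity and modules are unital. For an ideal $I$ of $R$ and an $R$-module $M$, $(0:_M I)=\{m\in M: Im=0\}$. An $R$-module $M$ is $I$-prime if for all $m\in M$, $Im=0$ implies $m=0$ or $IM=0$; $I$-coprime if $IM=0$ or $IM=M$; $I$-reduced if for all $m\in M$, $I^2m=0$ implies $Im=0$; $I$-coreduced if $IM=I^2M$. The $I$-torsion functor is $\Gamma_I(M)=\{m\in M : I^k m=0 \text{ for some } k\geq 1\}$ and $M$ is $I$-torsion if $\Gamma_I(M)=M$. The $I$-adic completion is $\Lambda_I(M)=\varprojlim_k M/I^kM$, and $M$ is $I$-adically complete if the canonical map $M\to\Lambda_I(M)$ is an isomorphism. *)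

theory Defs
  imports Complex_Main
begin

text \<open>Setting: R is a type 'a of class comm_ring_1; an R-module M is the whole type 'b
  (class ab_group_add) with a scalar multiplication s satisfying the locale module s
  from HOL.Modules.\<close>

definition is_ideal :: "'a::comm_ring_1 set \<Rightarrow> bool" where
  "is_ideal I \<longleftrightarrow> 0 \<in> I \<and> (\<forall>a\<in>I. \<forall>b\<in>I. a + b \<in> I) \<and> (\<forall>a\<in>I. \<forall>r. r * a \<in> I)"

definition idl_prod :: "'a::comm_ring_1 set \<Rightarrow> 'a set \<Rightarrow> 'a set" where
  "idl_prod I J = {x. \<exists>(n::nat) f g. (\<forall>i<n. f i \<in> I \<and> g i \<in> J) \<and> x = (\<Sum>i<n. f i * g i)}"

fun idl_pow :: "'a::comm_ring_1 set \<Rightarrow> nat \<Rightarrow> 'a set" where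
  "idl_pow I 0 = UNIV"
| "idl_pow I (Suc k) = idl_prod I (idl_pow I k)"

definition idl_smul :: "('a::comm_ring_1 \<Rightarrow> 'b::ab_group_add \<Rightarrow> 'b) \<Rightarrow> 'a set \<Rightarrow> 'b set" where
  "idl_smul s I = {x. \<exists>(n::nat) f g. (\<forall>i<n. f i \<in> I) \<and> x = (\<Sum>i<n. s (f i) (g i))}"

definition I_prime :: "('a::comm_ring_1 \<Rightarrow> 'b::ab_group_add \<Rightarrow> 'b) \<Rightarrow> 'a set \<Rightarrow> bool" where
  "I_prime s I \<longleftrightarrow> (\<forall>m. (\<forall>a\<in>I. s a m = 0) \<longrightarrow> m = 0 \<or> idl_smul s I = {0})"

definition I_coprime :: "('a::comm_ring_1 \<Rightarrow> 'b::ab_group_add \<Rightarrow> 'b) \<Rightarrow> 'a set \<Rightarrow> bool" where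
  "I_coprime s I \<longleftrightarrow> idl_smul s I = {0} \<or> idl_smul s I = UNIV"

definition I_reduced :: "('a::comm_ring_1 \<Rightarrow> 'b::ab_group_add \<Rightarrow> 'b) \<Rightarrow> 'a set \<Rightarrow> bool" where
  "I_reduced s I \<longleftrightarrow> (\<forall>m. (\<forall>a\<in>idl_pow I 2. s a m = 0) \<longrightarrow> (\<forall>a\<in>I. s a m = 0))"

definition I_coreduced :: "('a::comm_ring_1 \<Rightarrow> 'b::ab_group_add \<Rightarrow> 'b) \<Rightarrow> 'a set \<Rightarrow> bool" where
  "I_coreduced s I \<longleftrightarrow> idl_smul s I = idl_smul s (idl_pow I 2)"

definition I_torsion_part :: "('a::comm_ring_1 \<Rightarrow> 'b::ab_group_add \<Rightarrow> 'b) \<Rightarrow> 'a set \<Rightarrow> 'b set" where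
  "I_torsion_part s I = {m. \<exists>k\<ge>1. \<forall>a\<in>idl_pow I k. s a m = 0}"

definition I_torsion :: "('a::comm_ring_1 \<Rightarrow> 'b::ab_group_add \<Rightarrow> 'b) \<Rightarrow> 'a set \<Rightarrow> bool" where
  "I_torsion s I \<longleftrightarrow> I_torsion_part s I = UNIV"

text \<open>The I-adic completion Lambda_I(M) = inverse limit of M/I^kM, realised as the set of
  compatible families of cosets (c k a coset of I^kM, c (k+1) mapping to c k under the
  projection M/I^(k+1)M -> M/I^kM, i.e. c (k+1) contained in c k).\<close>
definition adic_completion :: "('a::comm_ring_1 \<Rightarrow> 'b::ab_group_add \<Rightarrow> 'b) \<Rightarrow> 'a set \<Rightarrow> (nat \<Rightarrow> 'b set) set" where
  "adic_completion s I = {c. (\<forall>k. \<exists>x. c k = (\<lambda>y. x + y) ` idl_smul s (idl_pow I k))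
                              \<and> (\<forall>k. c (Suc k) \<subseteq> c k)}"

definition adic_canonical :: "('a::comm_ring_1 \<Rightarrow> 'b::ab_group_add \<Rightarrow> 'b) \<Rightarrow> 'a set \<Rightarrow> 'b \<Rightarrow> nat \<Rightarrow> 'b set" where
  "adic_canonical s I m = (\<lambda>k. (\<lambda>y. m + y) ` idl_smul s (idl_pow I k))"

text \<open>Complete: the canonical (R-linear) map is an isomorphism, i.e. a bijection onto Lambda_I(M).\<close>
definition I_adically_complete :: "('a::comm_ring_1 \<Rightarrow> 'b::ab_group_add \<Rightarrow> 'b) \<Rightarrow> 'a set \<Rightarrow> bool" where
  "I_adically_complete s I \<longleftrightarrow> bij_betw (adic_canonical s I) UNIV (adic_completion s I)"

end

(*
  If IM = 0 then every power I^k with k \<ge> 1 kills M, so M is I-torsion with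
  exponent 1, all the other conditions hold trivially, and the I-adic tower is M, 0, 0, ...,
  whose inverse limit is M itself.

  Conversely, on the torsion side every m is killed by some I^k, and I^(k+1) m = 0 holds iff
  I^k (a m) = 0 for all a \<in> I.  Peeling off one factor of I at a time, I-primeness (when
  IM \<noteq> 0) forces every such m to be 0, and I-reducedness brings k down to 1.  On the
  completion side, coprimeness with IM = M and coreducedness both give IM \<subseteq> I^2 M, hence
  IM \<subseteq> I (IM) \<subseteq> I (I^k M) = I^(k+1) M for all k; a complete module is separated (the
  canonical map to the completion is injective), so IM \<subseteq> \<Inter>k I^k M = 0.
*)

theory Submission
  imports Defs
begin

abbreviation annihilates :: "('a::comm_ring_1 \<Rightarrow> 'b::ab_group_add \<Rightarrow> 'b) \<Rightarrow> 'a set \<Rightarrow> 'b \<Rightarrow> bool"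
  where "annihilates s J m \<equiv> \<forall>a\<in>J. s a m = 0"

lemma mult_mem_idl_prod: "a \<in> I \<Longrightarrow> b \<in> J \<Longrightarrow> a * b \<in> idl_prod I J"
  unfolding idl_prod_def
  by (intro CollectI exI[of _ 1] exI[of _ "\<lambda>_. a"] exI[of _ "\<lambda>_. b"]) simp

lemma idl_prodE:
  assumes "c \<in> idl_prod I J"
  obtains n :: nat and f g where "\<forall>i<n. f i \<in> I \<and> g i \<in> J" "c = (\<Sum>i<n. f i * g i)"
  using assms unfolding idl_prod_def by auto

lemma idl_smulI: "\<forall>i<n. f i \<in> J \<Longrightarrow> x = (\<Sum>i<(n::nat). s (f i) (g i)) \<Longrightarrow> x \<in> idl_smul s J"
  unfolding idl_smul_def by blast

lemma idl_smulE:
  assumes "x \<in> idl_smul s J"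
  obtains n :: nat and f g where "\<forall>i<n. f i \<in> J" "x = (\<Sum>i<n. s (f i) (g i))"
  using assms unfolding idl_smul_def by auto

lemma scale_mem_idl_smul: "a \<in> J \<Longrightarrow> s a m \<in> idl_smul s J"
  by (rule idl_smulI[where n = 1 and f = "\<lambda>_. a" and g = "\<lambda>_. m"]) simp_all

lemma add_scale_mem_idl_smul:
  assumes "x \<in> idl_smul s J" "a \<in> J"
  shows "x + s a m \<in> idl_smul s J"
proof -
  obtain n :: nat and f g where fg: "\<forall>i<n. f i \<in> J" "x = (\<Sum>i<n. s (f i) (g i))"
    using assms(1) by (rule idl_smulE)
  have "\<forall>i<Suc n. (f(n := a)) i \<in> J"
    using fg(1) assms(2) by (simp add: less_Suc_eq)
  moreover have "x + s a m = (\<Sum>i<Suc n. s ((f(n := a)) i) ((g(n := m)) i))"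
    using fg(2) by simp
  ultimately show ?thesis
    by (rule idl_smulI)
qed

lemma idl_pow_2: "idl_pow I 2 = idl_prod I (idl_pow I 1)"
  by (simp add: numeral_2_eq_2)

context
  fixes s :: "'a::comm_ring_1 \<Rightarrow> 'b::ab_group_add \<Rightarrow> 'b"
  assumes module: "module s"
begin

interpretation M: module s by (rule module)

lemma idl_smul_subspace: "M.subspace (idl_smul s J)"
proof (rule M.subspaceI)
  show "0 \<in> idl_smul s J"
    by (rule idl_smulI[of 0]) simp_all
next
  fix x y assume x: "x \<in> idl_smul s J" and y: "y \<in> idl_smul s J"
  from y obtain n :: nat and f g where "\<forall>i<n. f i \<in> J" "y = (\<Sum>i<n. s (f i) (g i))"
    by (rule idl_smulE)
  then show "x + y \<in> idl_smul s J"
  proof (induction n arbitrary: y)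
    case 0
    then show ?case using x by simp
  next
    case (Suc n)
    then have "x + (\<Sum>i<n. s (f i) (g i)) + s (f n) (g n) \<in> idl_smul s J"
      by (simp add: add_scale_mem_idl_smul)
    then show ?case
      using Suc.prems(2) by (simp add: add.assoc)
  qed
next
  fix c x assume "x \<in> idl_smul s J"
  then obtain n :: nat and f g where fg: "\<forall>i<n. f i \<in> J" "x = (\<Sum>i<n. s (f i) (g i))"
    by (rule idl_smulE)
  have "s c x = (\<Sum>i<n. s (f i) (s c (g i)))"
    unfolding fg(2) M.scale_sum_right by (intro sum.cong refl) (rule M.scale_left_commute)
  with fg(1) show "s c x \<in> idl_smul s J"
    by (rule idl_smulI)
qed

lemma idl_smul_subset:
  assumes "M.subspace Y" "\<And>a m. a \<in> J \<Longrightarrow> s a m \<in> Y"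
  shows "idl_smul s J \<subseteq> Y"
proof
  fix x assume "x \<in> idl_smul s J"
  then obtain n :: nat and f g where "\<forall>i<n. f i \<in> J" "x = (\<Sum>i<n. s (f i) (g i))"
    by (rule idl_smulE)
  then show "x \<in> Y"
    by (auto intro: M.subspace_sum[OF assms(1)] assms(2))
qed

lemma scale_idl_prod_mem:
  assumes "c \<in> idl_prod I J" "M.subspace Y" "\<And>a b. a \<in> I \<Longrightarrow> b \<in> J \<Longrightarrow> s a (s b m) \<in> Y"
  shows "s c m \<in> Y"
proof -
  obtain n :: nat and f g where fg: "\<forall>i<n. f i \<in> I \<and> g i \<in> J" "c = (\<Sum>i<n. f i * g i)"
    using assms(1) by (rule idl_prodE)
  have "s c m = (\<Sum>i<n. s (f i) (s (g i) m))"
    by (simp add: fg(2) M.scale_sum_left)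
  also have "\<dots> \<in> Y"
    by (rule M.subspace_sum[OF assms(2)]) (use assms(3) fg(1) in blast)
  finally show ?thesis .
qed

lemma idl_smul_idl_prod_subset:
  assumes "M.subspace Y" "\<And>a b m. a \<in> I \<Longrightarrow> b \<in> J \<Longrightarrow> s a (s b m) \<in> Y"
  shows "idl_smul s (idl_prod I J) \<subseteq> Y"
proof (rule idl_smul_subset[OF assms(1)])
  fix c m assume "c \<in> idl_prod I J"
  then show "s c m \<in> Y"
    by (rule scale_idl_prod_mem[OF _ assms(1) assms(2)])
qed

lemma idl_smul_idl_prod_subset_left: "idl_smul s (idl_prod I J) \<subseteq> idl_smul s I"
  by (rule idl_smul_idl_prod_subset[OF idl_smul_subspace scale_mem_idl_smul])

lemma idl_smul_idl_prod_subset_right: "idl_smul s (idl_prod I J) \<subseteq> idl_smul s J"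
proof (rule idl_smul_idl_prod_subset[OF idl_smul_subspace])
  fix a b m assume "b \<in> J"
  then show "s a (s b m) \<in> idl_smul s J"
    by (subst M.scale_left_commute) (rule scale_mem_idl_smul)
qed

lemma scale_mem_idl_smul_idl_prod:
  assumes "a \<in> I" "x \<in> idl_smul s J"
  shows "s a x \<in> idl_smul s (idl_prod I J)"
proof -
  have "idl_smul s J \<subseteq> {y. s a y \<in> idl_smul s (idl_prod I J)}"
  proof (rule idl_smul_subset)
    show "M.subspace {y. s a y \<in> idl_smul s (idl_prod I J)}"
      by (rule module_hom.subspace_linear_preimage[OF M.module_hom_scale_self idl_smul_subspace])
    fix b m assume "b \<in> J"
    with assms(1) have "a * b \<in> idl_prod I J"
      by (rule mult_mem_idl_prod)
    then show "s b m \<in> {y. s a y \<in> idl_smul s (idl_prod I J)}"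
      by (simp add: scale_mem_idl_smul)
  qed
  then show ?thesis
    using assms(2) by blast
qed

lemma idl_smul_idl_prod_mono:
  assumes "idl_smul s J \<subseteq> idl_smul s K"
  shows "idl_smul s (idl_prod I J) \<subseteq> idl_smul s (idl_prod I K)"
proof (rule idl_smul_idl_prod_subset[OF idl_smul_subspace])
  fix a b m assume "a \<in> I" "b \<in> J"
  then show "s a (s b m) \<in> idl_smul s (idl_prod I K)"
    using assms scale_mem_idl_smul scale_mem_idl_smul_idl_prod by blast
qed

lemma idl_smul_idl_prod_UNIV [simp]: "idl_smul s (idl_prod I UNIV) = idl_smul s I"
proof
  show "idl_smul s (idl_prod I UNIV) \<subseteq> idl_smul s I"
    by (rule idl_smul_idl_prod_subset_left)
  show "idl_smul s I \<subseteq> idl_smul s (idl_prod I UNIV)"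
  proof (rule idl_smul_subset[OF idl_smul_subspace])
    fix a m assume "a \<in> I"
    then have "a * 1 \<in> idl_prod I UNIV"
      by (rule mult_mem_idl_prod) simp
    then show "s a m \<in> idl_smul s (idl_prod I UNIV)"
      by (simp add: scale_mem_idl_smul)
  qed
qed

lemma idl_smul_idl_pow_Suc_subset: "idl_smul s (idl_pow I (Suc k)) \<subseteq> idl_smul s (idl_pow I k)"
  by (simp add: idl_smul_idl_prod_subset_right)

lemma idl_smul_eq_0_iff: "idl_smul s J = {0} \<longleftrightarrow> (\<forall>m. annihilates s J m)"
proof
  show "idl_smul s J = {0} \<Longrightarrow> \<forall>m. annihilates s J m"
    using scale_mem_idl_smul by blast
  assume "\<forall>m. annihilates s J m"
  then have "idl_smul s J \<subseteq> {0}"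
    by (intro idl_smul_subset) simp_all
  then show "idl_smul s J = {0}"
    using M.subspace_0[OF idl_smul_subspace] by blast
qed

lemma annihilates_idl_prod_iff:
  "annihilates s (idl_prod I J) m \<longleftrightarrow> (\<forall>a\<in>I. annihilates s J (s a m))"
proof
  assume ann: "annihilates s (idl_prod I J) m"
  show "\<forall>a\<in>I. annihilates s J (s a m)"
  proof (intro ballI)
    fix a b assume "a \<in> I" "b \<in> J"
    then have "s (a * b) m = 0"
      using ann mult_mem_idl_prod by blast
    then show "s b (s a m) = 0"
      by (simp add: mult.commute)
  qed
next
  assume ann: "\<forall>a\<in>I. annihilates s J (s a m)"
  show "annihilates s (idl_prod I J) m"
  proof
    fix c assume "c \<in> idl_prod I J"
    then have "s c m \<in> {0}"
    proof (rule scale_idl_prod_mem[OF _ M.subspace_single_0])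
      fix a b assume "a \<in> I" "b \<in> J"
      then have "s b (s a m) = 0"
        using ann by blast
      then show "s a (s b m) \<in> {0}"
        by (subst M.scale_left_commute) simp
    qed
    then show "s c m = 0"
      by simp
  qed
qed

lemma annihilates_idl_pow_0_iff: "annihilates s (idl_pow I 0) m \<longleftrightarrow> m = 0"
  by (metis M.scale_one M.scale_zero_right UNIV_I idl_pow.simps(1))

lemma annihilates_idl_pow_Suc_iff:
  "annihilates s (idl_pow I (Suc k)) m \<longleftrightarrow> (\<forall>a\<in>I. annihilates s (idl_pow I k) (s a m))"
  by (simp only: idl_pow.simps annihilates_idl_prod_iff)

lemma annihilates_idl_pow_1_iff: "annihilates s (idl_pow I 1) m \<longleftrightarrow> annihilates s I m"
  by (simp only: One_nat_def annihilates_idl_pow_Suc_iff annihilates_idl_pow_0_iff)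

lemma idl_smul_UNIV: "idl_smul s UNIV = UNIV"
  using scale_mem_idl_smul[where s = s and a = 1 and J = UNIV] by auto

lemma idl_smul_idl_pow_if_idl_smul_eq_0:
  assumes "idl_smul s I = {0}"
  shows "idl_smul s (idl_pow I k) = (if k = 0 then UNIV else {0})"
proof (cases k)
  case 0
  then show ?thesis
    by (simp add: idl_smul_UNIV)
next
  case (Suc l)
  then have "idl_smul s (idl_pow I k) \<subseteq> idl_smul s I"
    by (simp add: idl_smul_idl_prod_subset_left)
  then show ?thesis
    using Suc assms M.subspace_0[OF idl_smul_subspace] by auto
qed

lemma translation_subspace_eq: "M.subspace N \<Longrightarrow> x \<in> N \<Longrightarrow> (\<lambda>y. x + y) ` N = N"
proof
  assume N: "M.subspace N" and x: "x \<in> N"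
  then show "(\<lambda>y. x + y) ` N \<subseteq> N"
    using M.subspace_add by blast
  show "N \<subseteq> (\<lambda>y. x + y) ` N"
  proof
    fix z assume "z \<in> N"
    then have "z - x \<in> N"
      using M.subspace_diff N x by blast
    then show "z \<in> (\<lambda>y. x + y) ` N"
      by (rule image_eqI[rotated]) simp
  qed
qed

lemma adic_canonical_mem_completion: "adic_canonical s I m \<in> adic_completion s I"
  unfolding adic_completion_def adic_canonical_def
  using idl_smul_idl_pow_Suc_subset by (auto intro!: image_mono)

lemma adically_complete_separated:
  assumes "I_adically_complete s I" "\<And>k. x \<in> idl_smul s (idl_pow I k)"
  shows "x = 0"
proof -
  have "adic_canonical s I x = adic_canonical s I 0"
    unfolding adic_canonical_def
    using translation_subspace_eq[OF idl_smul_subspace assms(2)] by simp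
  then show ?thesis
    using assms(1) unfolding I_adically_complete_def bij_betw_def by (auto dest: injD)
qed

lemma adic_canonical_if_idl_smul_eq_0:
  assumes "idl_smul s I = {0}"
  shows "adic_canonical s I m = (\<lambda>k. if k = 0 then UNIV else {m})"
  by (auto simp: adic_canonical_def idl_smul_idl_pow_if_idl_smul_eq_0[OF assms] fun_eq_iff)

lemma adic_completion_subset_range_if_idl_smul_eq_0:
  assumes IM: "idl_smul s I = {0}"
  shows "adic_completion s I \<subseteq> range (adic_canonical s I)"
proof
  fix c assume "c \<in> adic_completion s I"
  then have cosets: "\<forall>k. \<exists>x. c k = (\<lambda>y. x + y) ` idl_smul s (idl_pow I k)"
    and dec: "\<And>k. c (Suc k) \<subseteq> c k"
    unfolding adic_completion_def by auto
  from choice[OF cosets] obtain x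
    where "\<And>k. c k = (\<lambda>y. x k + y) ` idl_smul s (idl_pow I k)"
    by blast
  then have c: "c k = (if k = 0 then UNIV else {x k})" for k
    by (simp add: idl_smul_idl_pow_if_idl_smul_eq_0[OF IM])
  have "c k = adic_canonical s I (x 1) k" for k
  proof (cases "k = 0")
    case False
    then have "{x k} \<subseteq> {x 1}"
      using lift_Suc_antimono_le[of c, OF dec, of 1 k] c by simp
    then show ?thesis
      using False by (simp add: c adic_canonical_if_idl_smul_eq_0[OF IM])
  qed (simp add: c adic_canonical_if_idl_smul_eq_0[OF IM])
  then have "c = adic_canonical s I (x 1)" ..
  then show "c \<in> range (adic_canonical s I)"
    by simp
qed

lemma I_adically_complete_if_idl_smul_eq_0:
  assumes "idl_smul s I = {0}"
  shows "I_adically_complete s I"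
proof -
  have "inj (adic_canonical s I)"
    by (rule injI) (drule fun_cong[of _ _ 1], simp add: adic_canonical_if_idl_smul_eq_0[OF assms])
  then show ?thesis
    unfolding I_adically_complete_def bij_betw_def
    using adic_canonical_mem_completion adic_completion_subset_range_if_idl_smul_eq_0[OF assms]
    by blast
qed

lemma idl_smul_subset_idl_pow:
  assumes "idl_smul s I \<subseteq> idl_smul s (idl_pow I 2)"
  shows "idl_smul s I \<subseteq> idl_smul s (idl_pow I k)"
proof (induction k)
  case 0
  then show ?case
    by (simp add: idl_smul_UNIV)
next
  case (Suc k)
  have "idl_smul s (idl_pow I 2) \<subseteq> idl_smul s (idl_prod I (idl_pow I k))"
    unfolding idl_pow_2 using Suc.IH
    by (intro idl_smul_idl_prod_mono) simp
  then show ?case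
    using assms by simp
qed

lemma idl_smul_subset_idl_pow_2_if_eq_UNIV:
  assumes "idl_smul s I = UNIV"
  shows "idl_smul s I \<subseteq> idl_smul s (idl_pow I 2)"
proof (rule idl_smul_subset[OF idl_smul_subspace])
  fix a m assume "a \<in> I"
  moreover have "m \<in> idl_smul s (idl_pow I 1)"
    using assms by simp
  ultimately show "s a m \<in> idl_smul s (idl_pow I 2)"
    unfolding idl_pow_2 by (rule scale_mem_idl_smul_idl_prod)
qed

lemma idl_smul_eq_0_if_adically_complete:
  assumes "I_adically_complete s I" "idl_smul s I \<subseteq> idl_smul s (idl_pow I 2)"
  shows "idl_smul s I = {0}"
  using adically_complete_separated[OF assms(1)] idl_smul_subset_idl_pow[OF assms(2)]
    M.subspace_0[OF idl_smul_subspace] by blast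

lemma I_prime_annihilated_by_pow_eq_0:
  assumes "I_prime s I" "idl_smul s I \<noteq> {0}"
  shows "annihilates s (idl_pow I k) m \<Longrightarrow> m = 0"
proof (induction k arbitrary: m)
  case 0
  then show ?case
    by (simp only: annihilates_idl_pow_0_iff)
next
  case (Suc k)
  then have "\<forall>a\<in>I. annihilates s (idl_pow I k) (s a m)"
    by (simp only: annihilates_idl_pow_Suc_iff)
  then have "annihilates s I m"
    using Suc.IH by blast
  then show ?case
    using assms unfolding I_prime_def by blast
qed

lemma I_reduced_annihilated_by_pow:
  assumes "I_reduced s I"
  shows "annihilates s (idl_pow I (Suc k)) m \<Longrightarrow> annihilates s I m"
proof (induction k arbitrary: m)
  case 0
  then show ?case
    by (simp only: One_nat_def[symmetric] annihilates_idl_pow_1_iff)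
next
  case (Suc k)
  then have "\<forall>a\<in>I. annihilates s (idl_pow I (Suc k)) (s a m)"
    by (simp only: annihilates_idl_pow_Suc_iff[where k = "Suc k"])
  then have "\<forall>a\<in>I. annihilates s I (s a m)"
    using Suc.IH by blast
  then have "annihilates s (idl_pow I 2) m"
    by (simp only: idl_pow_2 annihilates_idl_prod_iff annihilates_idl_pow_1_iff)
  then show ?case
    using assms unfolding I_reduced_def by blast
qed

lemma I_torsion_if_idl_smul_eq_0:
  assumes "idl_smul s I = {0}"
  shows "I_torsion s I"
proof -
  have "annihilates s I m" for m
    using assms idl_smul_eq_0_iff by blast
  then have "annihilates s (idl_pow I 1) m" for m
    by (simp only: annihilates_idl_pow_1_iff)
  then show ?thesis
    unfolding I_torsion_def I_torsion_part_def by blast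
qed

lemma I_prime_I_torsion_iff: "I_prime s I \<and> I_torsion s I \<longleftrightarrow> idl_smul s I = {0}"
proof
  assume prime_torsion: "I_prime s I \<and> I_torsion s I"
  show "idl_smul s I = {0}"
  proof (rule ccontr)
    assume IM: "idl_smul s I \<noteq> {0}"
    have "m = 0" for m :: 'b
    proof -
      obtain k where "annihilates s (idl_pow I k) m"
        using prime_torsion unfolding I_torsion_def I_torsion_part_def by blast
      then show "m = 0"
        using I_prime_annihilated_by_pow_eq_0 prime_torsion IM by blast
    qed
    then have "\<forall>m. annihilates s I m"
      by blast
    then show False
      using IM idl_smul_eq_0_iff by blast
  qed
next
  assume "idl_smul s I = {0}"
  then show "I_prime s I \<and> I_torsion s I"
    unfolding I_prime_def using I_torsion_if_idl_smul_eq_0 by blast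
qed

lemma I_reduced_I_torsion_iff: "I_reduced s I \<and> I_torsion s I \<longleftrightarrow> idl_smul s I = {0}"
proof
  assume reduced_torsion: "I_reduced s I \<and> I_torsion s I"
  have "annihilates s I m" for m
  proof -
    obtain k where k: "k \<ge> 1" "annihilates s (idl_pow I k) m"
      using reduced_torsion unfolding I_torsion_def I_torsion_part_def by blast
    from k(1) obtain l where "k = Suc l"
      by (cases k) auto
    with k(2) show ?thesis
      using I_reduced_annihilated_by_pow reduced_torsion by blast
  qed
  then show "idl_smul s I = {0}"
    using idl_smul_eq_0_iff by blast
next
  assume "idl_smul s I = {0}"
  then show "I_reduced s I \<and> I_torsion s I"
    unfolding I_reduced_def using idl_smul_eq_0_iff I_torsion_if_idl_smul_eq_0 by blast
qed

lemma I_coprime_I_adically_complete_iff: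
  "I_coprime s I \<and> I_adically_complete s I \<longleftrightarrow> idl_smul s I = {0}"
  unfolding I_coprime_def
  using idl_smul_eq_0_if_adically_complete idl_smul_subset_idl_pow_2_if_eq_UNIV
    I_adically_complete_if_idl_smul_eq_0 by blast

lemma I_coreduced_I_adically_complete_iff:
  "I_coreduced s I \<and> I_adically_complete s I \<longleftrightarrow> idl_smul s I = {0}"
proof
  assume "I_coreduced s I \<and> I_adically_complete s I"
  then show "idl_smul s I = {0}"
    unfolding I_coreduced_def by (intro idl_smul_eq_0_if_adically_complete) auto
next
  assume IM: "idl_smul s I = {0}"
  moreover have "idl_smul s (idl_pow I 2) = {0}"
    using idl_smul_idl_pow_if_idl_smul_eq_0[OF IM, of 2] by simp
  ultimately show "I_coreduced s I \<and> I_adically_complete s I"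
    unfolding I_coreduced_def by (simp add: I_adically_complete_if_idl_smul_eq_0)
qed

end

theorem mainTheorem2:
  fixes s :: "'a::comm_ring_1 \<Rightarrow> 'b::ab_group_add \<Rightarrow> 'b"
    and I :: "'a set"
  assumes "module s"
    and "is_ideal I"
  shows "(I_prime s I \<and> I_torsion s I \<longleftrightarrow> idl_smul s I = {0})
       \<and> (I_coprime s I \<and> I_adically_complete s I \<longleftrightarrow> idl_smul s I = {0})
       \<and> (I_reduced s I \<and> I_torsion s I \<longleftrightarrow> idl_smul s I = {0})
       \<and> (I_coreduced s I \<and> I_adically_complete s I \<longleftrightarrow> idl_smul s I = {0})"
  using assms(1)
  by (intro conjI I_prime_I_torsion_iff I_coprime_I_adically_complete_iff
      I_reduced_I_torsion_iff I_coreduced_I_adically_complete_iff)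

end
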